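(* Let $A\in\mathbb{R}^{m\times n}$, let $a=\max_{i,j}|A_{i,j}|$, and let $(U,V)$ be an iterative play system for $A$. Let $s,t\ge 0$ be integers and suppose that every row index $i\in\{1,\dots,m\}$ and every column index $j\in\{1,\dots,n\}$ is $E$-eligible in the interval $[s,s+t]$. Then $$\max U(s+t)-\min U(s+t)\le 2a(t+1)\quad\text{and}\quad \max V(s+t)-\min V(s+t)\le 2a(t+1).$$
   Context: An iterative play system $(U,V)$ for $A\in\mathbb{R}^{m\times n}$ is a pair of sequences $U(0),U(1),\dots\in\mathbb{R}^n$ and $V(0),V(1),\dots\in\mathbb{R}^m$ such that $\min U(0)=\max V(0)$ and, for each $t$, $U(t+1)=U(t)+A_{i(t),*}$ and $V(t+1)=V(t)+A_{*,j(t)}$ for some indices $i(t)\in\{1,\dots,m\}$, $j(t)\in\{1,\dots,n\}$, where $A_{i,*}$ is the $i$th row and $A_{*,j}$ the $j$th column of $A$. Write $u_j(t)$, $v_i(t)$ for the entries of $U(t)$, $V(t)$, and $\max$, $\min$ of a vector for its largest/smallest entry. With $a=\max_{i,j}|A_{i,j}|$, row $i$ is $E$-eligible in $[t,t']$ if there exists an integer $t_1\in[t,t']$ with $v_i(t_1)\ge\max V(t_1)-2a$; column $j$ is $E$-eligible in $[t,t']$ if there exists $t_1\in[t,t']$ with $u_j(t_1)\le\min U(t_1)+2a$. *)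

theory Defs
  imports "HOL-Analysis.Analysis"
begin

text \<open>Matrices A in R^(m x n) are rendered as real^'n^'m (rows indexed by 'm, columns by 'n);
  row i A and column j A are the library's row/column. Vectors U(t) :: real^'n, V(t) :: real^'m.\<close>

definition vmax :: "real^'k \<Rightarrow> real" where
  "vmax x = Max (range (\<lambda>i. x $ i))"

definition vmin :: "real^'k \<Rightarrow> real" where
  "vmin x = Min (range (\<lambda>i. x $ i))"

definition mat_absmax :: "real^'n^'m \<Rightarrow> real" where
  "mat_absmax A = Max {\<bar>A $ i $ j\<bar> | i j. True}"

definition iterative_play_system ::
  "real^'n^'m \<Rightarrow> (nat \<Rightarrow> real^'n) \<Rightarrow> (nat \<Rightarrow> real^'m) \<Rightarrow> bool" where
  "iterative_play_system A U V \<longleftrightarrow>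
     vmin (U 0) = vmax (V 0) \<and>
     (\<forall>t. \<exists>i j. U (Suc t) = U t + row i A \<and> V (Suc t) = V t + column j A)"

definition row_E_eligible ::
  "real^'n^'m \<Rightarrow> (nat \<Rightarrow> real^'m) \<Rightarrow> 'm \<Rightarrow> nat \<Rightarrow> nat \<Rightarrow> bool" where
  "row_E_eligible A V i t t' \<longleftrightarrow>
     (\<exists>t1. t \<le> t1 \<and> t1 \<le> t' \<and> V t1 $ i \<ge> vmax (V t1) - 2 * mat_absmax A)"

definition col_E_eligible ::
  "real^'n^'m \<Rightarrow> (nat \<Rightarrow> real^'n) \<Rightarrow> 'n \<Rightarrow> nat \<Rightarrow> nat \<Rightarrow> bool" where
  "col_E_eligible A U j t t' \<longleftrightarrow>
     (\<exists>t1. t \<le> t1 \<and> t1 \<le> t' \<and> U t1 $ j \<le> vmin (U t1) + 2 * mat_absmax A)"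

end

theory Submission
  imports Defs
begin

text \<open>Each play step adds a row resp. column of \<open>A\<close>, so every coordinate of \<open>U\<close> and \<open>V\<close> moves
  by at most \<open>a\<close> per step and the gap between two coordinates grows by at most \<open>2a\<close> per step.
  Eligibility of a coordinate at some time \<open>t\<^sub>1 \<in> [s, s + t]\<close> bounds its gap to every other
  coordinate at \<open>t\<^sub>1\<close> by \<open>2a\<close>. Applied to the coordinates that are maximal and minimal at time
  \<open>s + t\<close>, this bounds their gap there by \<open>2a + 2at\<close>.\<close>

lemma vmin_le: "vmin x \<le> x $ i"
  unfolding vmin_def by (rule Min_le) auto

lemma vmax_ge: "x $ i \<le> vmax x"
  unfolding vmax_def by (rule Max_ge) auto

lemma vmin_attained:
  obtains i where "x $ i = vmin (x :: real^'k)"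
proof -
  have "Min (range (\<lambda>i. x $ i)) \<in> range (\<lambda>i. x $ i)" by (rule Min_in) auto
  then show ?thesis using that unfolding vmin_def by (metis imageE)
qed

lemma vmax_attained:
  obtains i where "x $ i = vmax (x :: real^'k)"
proof -
  have "Max (range (\<lambda>i. x $ i)) \<in> range (\<lambda>i. x $ i)" by (rule Max_in) auto
  then show ?thesis using that unfolding vmax_def by (metis imageE)
qed

lemma abs_entry_le_mat_absmax: "\<bar>A $ i $ j\<bar> \<le> mat_absmax A"
proof -
  have "{\<bar>A $ i $ j\<bar> | i j. True} = (\<lambda>(i, j). \<bar>A $ i $ j\<bar>) ` UNIV" by auto
  then have "finite {\<bar>A $ i $ j\<bar> | i j. True}" by simp
  then show ?thesis unfolding mat_absmax_def by (rule Max_ge) auto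
qed

lemma coordinate_drift_le:
  fixes f :: "nat \<Rightarrow> real^'k"
  assumes step: "\<And>t j. \<bar>f (Suc t) $ j - f t $ j\<bar> \<le> a"
  shows "\<bar>f (t + k) $ j - f t $ j\<bar> \<le> real k * a"
proof (induction k)
  case 0
  then show ?case by simp
next
  case (Suc k)
  have "\<bar>f (Suc (t + k)) $ j - f (t + k) $ j\<bar> \<le> a" by (rule step)
  with Suc show ?case by (simp add: algebra_simps)
qed

lemma coordinate_gap_growth:
  fixes f :: "nat \<Rightarrow> real^'k"
  assumes step: "\<And>t j. \<bar>f (Suc t) $ j - f t $ j\<bar> \<le> a"
  shows "f (t + k) $ i - f (t + k) $ j \<le> f t $ i - f t $ j + 2 * real k * a"
  using coordinate_drift_le[of f a, OF step, of t k i] coordinate_drift_le[of f a, OF step, of t k j] by linarith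

lemma spread_le_if_gaps_closed:
  fixes f :: "nat \<Rightarrow> real^'k"
  assumes step: "\<And>t j. \<bar>f (Suc t) $ j - f t $ j\<bar> \<le> a"
    and gap: "\<And>i j. \<exists>t\<^sub>1. s \<le> t\<^sub>1 \<and> t\<^sub>1 \<le> s + t \<and> f t\<^sub>1 $ i - f t\<^sub>1 $ j \<le> c"
  shows "vmax (f (s + t)) - vmin (f (s + t)) \<le> c + 2 * real t * a"
proof -
  obtain i where i: "f (s + t) $ i = vmax (f (s + t))" by (rule vmax_attained)
  obtain j where j: "f (s + t) $ j = vmin (f (s + t))" by (rule vmin_attained)
  obtain t\<^sub>1 where t\<^sub>1: "s \<le> t\<^sub>1" "t\<^sub>1 \<le> s + t" and gap_t\<^sub>1: "f t\<^sub>1 $ i - f t\<^sub>1 $ j \<le> c"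
    using gap by blast
  define k where "k = s + t - t\<^sub>1"
  have st: "s + t = t\<^sub>1 + k" and kt: "k \<le> t" using t\<^sub>1 by (auto simp: k_def)
  have a_nonneg: "0 \<le> a" using step[of 0 i] by simp
  have "vmax (f (s + t)) - vmin (f (s + t)) \<le> c + 2 * real k * a"
    using coordinate_gap_growth[of f a, OF step, of t\<^sub>1 k i j] gap_t\<^sub>1 i j st by simp
  also have "\<dots> \<le> c + 2 * real t * a"
    using kt a_nonneg by (simp add: mult_right_mono)
  finally show ?thesis .
qed

lemma iterative_play_system_U_step:
  assumes "iterative_play_system A U V"
  shows "\<bar>U (Suc t) $ j - U t $ j\<bar> \<le> mat_absmax A"
proof -
  obtain i where "U (Suc t) = U t + row i A"
    using assms unfolding iterative_play_system_def by blast
  then show ?thesis using abs_entry_le_mat_absmax[of A i j] by (simp add: row_def)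
qed

lemma iterative_play_system_V_step:
  assumes "iterative_play_system A U V"
  shows "\<bar>V (Suc t) $ i - V t $ i\<bar> \<le> mat_absmax A"
proof -
  obtain j where "V (Suc t) = V t + column j A"
    using assms unfolding iterative_play_system_def by blast
  then show ?thesis using abs_entry_le_mat_absmax[of A i j] by (simp add: column_def)
qed

lemma col_E_eligible_gap:
  assumes "col_E_eligible A U j s s'"
  shows "\<exists>t\<^sub>1. s \<le> t\<^sub>1 \<and> t\<^sub>1 \<le> s' \<and> U t\<^sub>1 $ j - U t\<^sub>1 $ j' \<le> 2 * mat_absmax A"
proof -
  obtain t\<^sub>1 where "s \<le> t\<^sub>1" "t\<^sub>1 \<le> s'" "U t\<^sub>1 $ j \<le> vmin (U t\<^sub>1) + 2 * mat_absmax A"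
    using assms unfolding col_E_eligible_def by blast
  then show ?thesis using vmin_le[of "U t\<^sub>1" j'] by force
qed

lemma row_E_eligible_gap:
  assumes "row_E_eligible A V i s s'"
  shows "\<exists>t\<^sub>1. s \<le> t\<^sub>1 \<and> t\<^sub>1 \<le> s' \<and> V t\<^sub>1 $ i' - V t\<^sub>1 $ i \<le> 2 * mat_absmax A"
proof -
  obtain t\<^sub>1 where "s \<le> t\<^sub>1" "t\<^sub>1 \<le> s'" "V t\<^sub>1 $ i \<ge> vmax (V t\<^sub>1) - 2 * mat_absmax A"
    using assms unfolding row_E_eligible_def by blast
  then show ?thesis using vmax_ge[of "V t\<^sub>1" i'] by force
qed

theorem lemma2:
  fixes A :: "real^'n^'m"
    and U :: "nat \<Rightarrow> real^'n"
    and V :: "nat \<Rightarrow> real^'m"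
    and s t :: nat
  assumes "iterative_play_system A U V"
    and "\<forall>i. row_E_eligible A V i s (s + t)"
    and "\<forall>j. col_E_eligible A U j s (s + t)"
  shows "vmax (U (s + t)) - vmin (U (s + t)) \<le> 2 * mat_absmax A * (real t + 1)
       \<and> vmax (V (s + t)) - vmin (V (s + t)) \<le> 2 * mat_absmax A * (real t + 1)"
proof -
  have "vmax (U (s + t)) - vmin (U (s + t)) \<le> 2 * mat_absmax A + 2 * real t * mat_absmax A"
  proof (rule spread_le_if_gaps_closed)
    show "\<bar>U (Suc t') $ j - U t' $ j\<bar> \<le> mat_absmax A" for t' j
      using assms(1) by (rule iterative_play_system_U_step)
    show "\<exists>t\<^sub>1\<ge>s. t\<^sub>1 \<le> s + t \<and> U t\<^sub>1 $ j - U t\<^sub>1 $ j' \<le> 2 * mat_absmax A" for j j'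
      using assms(3) col_E_eligible_gap by blast
  qed
  moreover have "vmax (V (s + t)) - vmin (V (s + t)) \<le> 2 * mat_absmax A + 2 * real t * mat_absmax A"
  proof (rule spread_le_if_gaps_closed)
    show "\<bar>V (Suc t') $ i - V t' $ i\<bar> \<le> mat_absmax A" for t' i
      using assms(1) by (rule iterative_play_system_V_step)
    show "\<exists>t\<^sub>1\<ge>s. t\<^sub>1 \<le> s + t \<and> V t\<^sub>1 $ i' - V t\<^sub>1 $ i \<le> 2 * mat_absmax A" for i' i
      using assms(2) row_E_eligible_gap by blast
  qed
  ultimately show ?thesis by (simp add: algebra_simps)
qed

end
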